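(* Let $n,m$ be positive integers and $\mathbf a=(a_1,\dots,a_n),\mathbf b=(b_1,\dots,b_n)\in\mathbb N^n$. Let $b_{n+1}=\sum_{i=1}^n(a_i-b_i)$, $\mathbf a'=(a_1-b_1,a_2,\dots,a_n,0)$ and $\mathbf b'=(0,b_2,\dots,b_n,b_{n+1})$. Then $\mathcal F_{G(n,m)}(\mathbf a,\mathbf b)$ is integrally equivalent to $\mathcal F_{H(n,m)}(\mathbf a',\mathbf b')$.
   Context: $G(n,m)$ has vertex set $\{(i,j):1\le i\le n,0\le j\le m\}\cup\{s\}$ and edges $((i,j),(i,j+1))$ ($1\le i\le n$, $0\le j\le m-1$), $((i,j),(i+1,j))$ ($1\le i\le n-1$, $0\le j\le m$), $((n,j),s)$ ($0\le j\le m$); $\mathcal F_{G(n,m)}(\mathbf a,\mathbf b)$ is the set of nonnegative real edge weightings with outflow minus inflow $a_i$ at $(i,0)$, $-b_i$ at $(i,m)$, $-\sum a_i+\sum b_i$ at $s$, $0$ elsewhere. $H(n,m)$ is the directed grid graph with vertex set $\{(i,j):1\le i\le n+1,0\le j\le m\}$ and edges $((i,j),(i,j+1))$ ($1\le i\le n+1$, $0\le j\le m-1$) and $((i,j),(i+1,j))$ ($1\le i\le n$, $0\le j\le m$). For $\mathbf a'=(a'_1,\dots,a'_{n+1})$, $\mathbf b'=(b'_1,\dots,b'_{n+1})$ with equal sums, $\mathcal F_{H(n,m)}(\mathbf a',\mathbf b')$ is the set of nonnegative real edge weightings with outflow minus inflow $a'_i$ at $(i,0)$, $-b'_i$ at $(i,m)$,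 and $0$ elsewhere. Integral equivalence: an affine map restricting to a bijection between the polytopes that preserves the lattice. *)

theory Defs
  imports Complex_Main
begin

definition netflow :: "('v \<times> 'v) set \<Rightarrow> (('v \<times> 'v) \<Rightarrow> real) \<Rightarrow> 'v \<Rightarrow> real" where
  "netflow E w v = (\<Sum>e\<in>{e\<in>E. fst e = v}. w e) - (\<Sum>e\<in>{e\<in>E. snd e = v}. w e)"

(* Flow polytope: nonnegative real edge weightings (vanishing off E, i.e. points of R^E)
   with prescribed net flow d v at every vertex v \<in> V. *)
definition flow_polytope ::
  "'v set \<Rightarrow> ('v \<times> 'v) set \<Rightarrow> ('v \<Rightarrow> real) \<Rightarrow> ((('v \<times> 'v) \<Rightarrow> real) set)" where
  "flow_polytope V E d =
     {w. (\<forall>e. e \<notin> E \<longrightarrow> w e = 0) \<and> (\<forall>e\<in>E. 0 \<le> w e) \<and> (\<forall>v\<in>V. netflow E w v = d v)}"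

(* The graph G(n,m): vertex Some (i,j) is (i,j), vertex None is the sink s. *)
definition vertsG :: "nat \<Rightarrow> nat \<Rightarrow> (nat \<times> nat) option set" where
  "vertsG n m = {Some (i, j) | i j. 1 \<le> i \<and> i \<le> n \<and> j \<le> m} \<union> {None}"

definition edgesG :: "nat \<Rightarrow> nat \<Rightarrow> ((nat \<times> nat) option \<times> (nat \<times> nat) option) set" where
  "edgesG n m =
     {(Some (i, j), Some (i, j + 1)) | i j. 1 \<le> i \<and> i \<le> n \<and> j < m}
   \<union> {(Some (i, j), Some (i + 1, j)) | i j. 1 \<le> i \<and> i < n \<and> j \<le> m}
   \<union> {(Some (n, j), None) | j. j \<le> m}"

definition demandG :: "nat \<Rightarrow> nat \<Rightarrow> (nat \<Rightarrow> real) \<Rightarrow> (nat \<Rightarrow> real) \<Rightarrow> (nat \<times> nat) option \<Rightarrow> real" where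
  "demandG n m a b v = (case v of
      None \<Rightarrow> - (\<Sum>i=1..n. a i) + (\<Sum>i=1..n. b i)
    | Some (i, j) \<Rightarrow> (if j = 0 then a i else 0) - (if j = m then b i else 0))"

definition flowG :: "nat \<Rightarrow> nat \<Rightarrow> (nat \<Rightarrow> real) \<Rightarrow> (nat \<Rightarrow> real)
    \<Rightarrow> ((((nat \<times> nat) option \<times> (nat \<times> nat) option) \<Rightarrow> real) set)" where
  "flowG n m a b = flow_polytope (vertsG n m) (edgesG n m) (demandG n m a b)"

definition vertsH :: "nat \<Rightarrow> nat \<Rightarrow> (nat \<times> nat) set" where
  "vertsH n m = {(i, j) | i j. 1 \<le> i \<and> i \<le> n + 1 \<and> j \<le> m}"

definition edgesH :: "nat \<Rightarrow> nat \<Rightarrow> ((nat \<times> nat) \<times> (nat \<times> nat)) set" where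
  "edgesH n m =
     {((i, j), (i, j + 1)) | i j. 1 \<le> i \<and> i \<le> n + 1 \<and> j < m}
   \<union> {((i, j), (i + 1, j)) | i j. 1 \<le> i \<and> i \<le> n \<and> j \<le> m}"

definition demandH :: "nat \<Rightarrow> nat \<Rightarrow> (nat \<Rightarrow> real) \<Rightarrow> (nat \<Rightarrow> real) \<Rightarrow> nat \<times> nat \<Rightarrow> real" where
  "demandH n m a' b' v = (case v of (i, j) \<Rightarrow>
      (if j = 0 then a' i else 0) - (if j = m then b' i else 0))"

definition flowH :: "nat \<Rightarrow> nat \<Rightarrow> (nat \<Rightarrow> real) \<Rightarrow> (nat \<Rightarrow> real)
    \<Rightarrow> ((((nat \<times> nat) \<times> (nat \<times> nat)) \<Rightarrow> real) set)" where
  "flowH n m a' b' = flow_polytope (vertsH n m) (edgesH n m) (demandH n m a' b')"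

definition aff_hull :: "('e \<Rightarrow> real) set \<Rightarrow> ('e \<Rightarrow> real) set" where
  "aff_hull P = {y. \<exists>S u. finite S \<and> S \<subseteq> P \<and> sum u S = 1 \<and> y = (\<lambda>e. \<Sum>x\<in>S. u x * x e)}"

definition int_points :: "('e \<Rightarrow> real) set" where
  "int_points = {x. \<forall>e. x e \<in> \<int>}"

definition affine_map :: "'e1 set \<Rightarrow> 'e2 set \<Rightarrow> ('e2 \<Rightarrow> real) \<Rightarrow> ('e2 \<Rightarrow> 'e1 \<Rightarrow> real)
    \<Rightarrow> ('e1 \<Rightarrow> real) \<Rightarrow> ('e2 \<Rightarrow> real)" where
  "affine_map E1 E2 c M x = (\<lambda>e'. if e' \<in> E2 then c e' + (\<Sum>e\<in>E1. M e' e * x e) else 0)"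

definition integrally_equivalent ::
  "'e1 set \<Rightarrow> ('e1 \<Rightarrow> real) set \<Rightarrow> 'e2 set \<Rightarrow> ('e2 \<Rightarrow> real) set \<Rightarrow> bool" where
  "integrally_equivalent E1 P E2 Q \<longleftrightarrow>
     (\<exists>c M. bij_betw (affine_map E1 E2 c M) P Q \<and>
            bij_betw (affine_map E1 E2 c M) (aff_hull P \<inter> int_points) (aff_hull Q \<inter> int_points))"

end

theory Submission imports Defs begin

(* A flow on G(n,m) becomes a flow on H(n,m) edge by edge: the sink edge ((n,j),s) becomes the
   vertical edge ((n,j),(n+1,j)), the new edge ((n+1,j),(n+1,j+1)) carries the total flow that has
   entered the sink through columns 0..j, and the flow on every horizontal edge of row 1 is lowered
   by b_1. The shift keeps flows nonnegative: row 1 receives nothing from above, so its horizontal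
   flows decrease from left to right and all of them still carry the b_1 units that leave at (1,m).
   The resulting map is affine with a 0/1 matrix and an integral translation, and its inverse
   (forget row n+1, add b_1 back on row 1) is integral as well. *)

section \<open>Integral equivalence through affine bijections\<close>

lemma affine_map_affine_combination:
  assumes "sum u S = 1"
  shows "affine_map E1 E2 c M (\<lambda>e. \<Sum>x\<in>S. u x * x e) = (\<lambda>e. \<Sum>x\<in>S. u x * affine_map E1 E2 c M x e)"
proof
  fix e'
  show "affine_map E1 E2 c M (\<lambda>e. \<Sum>x\<in>S. u x * x e) e' = (\<Sum>x\<in>S. u x * affine_map E1 E2 c M x e')"
  proof (cases "e' \<in> E2")
    case True
    have "(\<Sum>x\<in>S. u x * (c e' + (\<Sum>e\<in>E1. M e' e * x e)))
        = (\<Sum>x\<in>S. u x) * c e' + (\<Sum>x\<in>S. \<Sum>e\<in>E1. M e' e * (u x * x e))"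
      by (simp add: distrib_left sum.distrib sum_distrib_left sum_distrib_right mult.left_commute)
    also have "\<dots> = c e' + (\<Sum>e\<in>E1. M e' e * (\<Sum>x\<in>S. u x * x e))"
      using assms by (simp add: sum.swap[of _ E1] sum_distrib_left)
    finally show ?thesis using True by (simp add: affine_map_def)
  qed (simp add: affine_map_def)
qed

lemma aff_hull_image:
  assumes inj: "inj_on (affine_map E1 E2 c M) P"
  shows "affine_map E1 E2 c M ` aff_hull P = aff_hull (affine_map E1 E2 c M ` P)"
proof (intro equalityI subsetI)
  let ?f = "affine_map E1 E2 c M"
  fix z assume "z \<in> ?f ` aff_hull P"
  then obtain S u where S: "finite S" "S \<subseteq> P" "sum u S = 1" and z: "z = ?f (\<lambda>e. \<Sum>x\<in>S. u x * x e)"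
    unfolding aff_hull_def by blast
  have injS: "inj_on ?f S" using inj S(2) by (rule inj_on_subset)
  define v where "v = u \<circ> the_inv_into S ?f"
  have v: "v (?f x) = u x" if "x \<in> S" for x
    using that injS by (simp add: v_def the_inv_into_f_f)
  have "z = (\<lambda>e. \<Sum>q\<in>?f ` S. v q * q e)"
    using z S(3) by (simp add: affine_map_affine_combination sum.reindex[OF injS] v)
  moreover have "sum v (?f ` S) = 1"
    using S(3) by (simp add: sum.reindex[OF injS] v)
  ultimately show "z \<in> aff_hull (?f ` P)"
    unfolding aff_hull_def using S by blast
next
  let ?f = "affine_map E1 E2 c M"
  fix z assume "z \<in> aff_hull (?f ` P)"
  then obtain T v where T: "finite T" "T \<subseteq> ?f ` P" "sum v T = 1" and z: "z = (\<lambda>e. \<Sum>q\<in>T. v q * q e)"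
    unfolding aff_hull_def by blast
  obtain S where S: "S \<subseteq> P" "finite S" "T = ?f ` S"
    using finite_subset_image[OF T(1,2)] by blast
  have injS: "inj_on ?f S" using inj S(1) by (rule inj_on_subset)
  have sum1: "sum (v \<circ> ?f) S = 1"
    using T(3) S(3) by (simp add: sum.reindex[OF injS])
  then have "z = ?f (\<lambda>e. \<Sum>x\<in>S. (v \<circ> ?f) x * x e)"
    using z S(3) by (simp add: affine_map_affine_combination sum.reindex[OF injS])
  moreover have "(\<lambda>e. \<Sum>x\<in>S. (v \<circ> ?f) x * x e) \<in> aff_hull P"
    unfolding aff_hull_def using S sum1 by blast
  ultimately show "z \<in> ?f ` aff_hull P" by blast
qed

lemma aff_hull_supported:
  assumes "\<And>x e. x \<in> P \<Longrightarrow> e \<notin> E \<Longrightarrow> x e = 0" "y \<in> aff_hull P" "e \<notin> E"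
  shows "y e = 0"
  using assms unfolding aff_hull_def by (auto intro!: sum.neutral)

lemma affine_map_int_points:
  assumes "\<And>e'. c e' \<in> \<int>" "\<And>e' e. M e' e \<in> \<int>"
  shows "affine_map E1 E2 c M ` int_points \<subseteq> int_points"
  using assms unfolding int_points_def affine_map_def by (auto intro!: Ints_add Ints_sum Ints_mult)

lemma affine_map_of_bool_apply:
  assumes "finite E1" "e' \<in> E2" "S e' \<subseteq> E1"
  shows "affine_map E1 E2 c (\<lambda>e' e. of_bool (e \<in> S e')) x e' = c e' + sum x (S e')"
proof -
  have "(\<Sum>e\<in>E1. of_bool (e \<in> S e') * x e) = (\<Sum>e\<in>E1. if e \<in> S e' then x e else 0)"
    by (intro sum.cong) auto
  also have "\<dots> = sum x (E1 \<inter> S e')"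
    using assms(1) by (simp add: sum.inter_restrict)
  also have "E1 \<inter> S e' = S e'" using assms(3) by blast
  finally show ?thesis using assms(2) by (simp add: affine_map_def)
qed

lemma integrally_equivalentI:
  assumes supported: "\<And>x e. x \<in> P \<Longrightarrow> e \<notin> E1 \<Longrightarrow> x e = 0"
    and image: "affine_map E1 E2 c M ` P = Q"
    and left_inverse: "\<And>x. (\<And>e. e \<notin> E1 \<Longrightarrow> x e = 0) \<Longrightarrow> g (affine_map E1 E2 c M x) = x"
    and f_int: "affine_map E1 E2 c M ` int_points \<subseteq> int_points"
    and g_int: "g ` int_points \<subseteq> int_points"
  shows "integrally_equivalent E1 P E2 Q"
proof -
  let ?f = "affine_map E1 E2 c M"
  have "inj_on ?f (aff_hull P)"
    by (rule inj_on_inverseI[where g = g]) (metis aff_hull_supported supported left_inverse)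
  moreover have "P \<subseteq> aff_hull P"
    unfolding aff_hull_def by (force intro: exI[of _ "\<lambda>_. 1"])
  ultimately have inj_P: "inj_on ?f P" by (rule inj_on_subset)
  then have hull: "?f ` aff_hull P = aff_hull Q"
    using aff_hull_image image by metis
  have "?f ` (aff_hull P \<inter> int_points) = aff_hull Q \<inter> int_points"
  proof (intro equalityI subsetI)
    fix z assume "z \<in> aff_hull Q \<inter> int_points"
    then obtain y where y: "y \<in> aff_hull P" "z = ?f y" "z \<in> int_points"
      using hull by (metis IntD1 IntD2 imageE)
    then have "y = g z" by (metis aff_hull_supported supported left_inverse)
    then show "z \<in> ?f ` (aff_hull P \<inter> int_points)" using y g_int by blast
  qed (use hull f_int in blast)
  then show ?thesis
    unfolding integrally_equivalent_def bij_betw_def using inj_P image \<open>inj_on ?f (aff_hull P)\<close>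
    by (blast intro: inj_on_subset)
qed

section \<open>The correspondence between flows on G(n,m) and H(n,m)\<close>

type_synonym edgeG = "(nat \<times> nat) option \<times> (nat \<times> nat) option"
type_synonym edgeH = "(nat \<times> nat) \<times> (nat \<times> nat)"

lemma finite_edgesG: "finite (edgesG n m)"
proof -
  let ?V = "insert None (Some ` ({0..n+1} \<times> {0..m+1}))"
  have "edgesG n m \<subseteq> ?V \<times> ?V" by (auto simp: edgesG_def)
  then show ?thesis by (rule finite_subset) auto
qed

lemma edgesG_horizontal_iff: "(Some (i,j), Some (i,Suc j)) \<in> edgesG n m \<longleftrightarrow> 1 \<le> i \<and> i \<le> n \<and> j < m"
  by (auto simp: edgesG_def)

lemma edgesG_vertical_iff: "(Some (i,j), Some (Suc i,j)) \<in> edgesG n m \<longleftrightarrow> 1 \<le> i \<and> i < n \<and> j \<le> m"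
  by (auto simp: edgesG_def)

lemma edgesG_sink_iff: "(Some (i,j), None) \<in> edgesG n m \<longleftrightarrow> i = n \<and> j \<le> m"
  by (auto simp: edgesG_def)

lemma edgesH_horizontal_iff: "((i,j),(i,Suc j)) \<in> edgesH n m \<longleftrightarrow> 1 \<le> i \<and> i \<le> n+1 \<and> j < m"
  by (auto simp: edgesH_def)

lemma edgesH_vertical_iff: "((i,j),(Suc i,j)) \<in> edgesH n m \<longleftrightarrow> 1 \<le> i \<and> i \<le> n \<and> j \<le> m"
  by (auto simp: edgesH_def)

lemma edgesG_cases:
  assumes "e \<in> edgesG n m"
  obtains i j where "e = (Some (i,j), Some (i,Suc j))" "1 \<le> i" "i \<le> n" "j < m"
    | i j where "e = (Some (i,j), Some (Suc i,j))" "1 \<le> i" "i < n" "j \<le> m"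
    | j where "e = (Some (n,j), None)" "j \<le> m"
  using assms by (auto simp: edgesG_def)

lemma edgesH_cases:
  assumes "e \<in> edgesH n m"
  obtains i j where "e = ((i,j),(i,Suc j))" "1 \<le> i" "i \<le> n+1" "j < m"
    | i j where "e = ((i,j),(Suc i,j))" "1 \<le> i" "i \<le> n" "j \<le> m"
  using assms by (auto simp: edgesH_def)

lemma netflow_edgesG_Some:
  assumes "1 \<le> i" "i \<le> n" "j \<le> m"
  shows "netflow (edgesG n m) w (Some (i,j)) =
     (if j < m then w (Some (i,j), Some (i,j+1)) else 0)
   + (if i < n then w (Some (i,j), Some (i+1,j)) else w (Some (i,j), None))
   - (if 0 < j then w (Some (i,j-1), Some (i,j)) else 0)
   - (if 1 < i then w (Some (i-1,j), Some (i,j)) else 0)"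
proof -
  have out: "{e\<in>edgesG n m. fst e = Some (i,j)} =
     (if j < m then {(Some (i,j), Some (i,j+1))} else {})
   \<union> (if i < n then {(Some (i,j), Some (i+1,j))} else {(Some (i,j), None)})"
    using assms by (auto simp: edgesG_def split: if_splits)
  have "in": "{e\<in>edgesG n m. snd e = Some (i,j)} =
     (if 0 < j then {(Some (i,j-1), Some (i,j))} else {})
   \<union> (if 1 < i then {(Some (i-1,j), Some (i,j))} else {})"
    using assms by (auto simp: edgesG_def split: if_splits)
  show ?thesis unfolding netflow_def out "in"
    by (cases "j < m"; cases "i < n"; cases "0 < j"; cases "1 < i") auto
qed

lemma netflow_edgesG_None: "netflow (edgesG n m) w None = - (\<Sum>j\<le>m. w (Some (n,j), None))"
proof -
  have out: "{e\<in>edgesG n m. fst e = None} = {}"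
    by (auto simp: edgesG_def)
  have "in": "{e\<in>edgesG n m. snd e = None} = (\<lambda>j. (Some (n,j), None)) ` {..m}"
    by (auto simp: edgesG_def)
  show ?thesis
    unfolding netflow_def out "in" by (simp add: sum.reindex inj_on_def)
qed

lemma netflow_edgesH:
  assumes "1 \<le> i" "i \<le> n+1" "j \<le> m"
  shows "netflow (edgesH n m) w (i,j) =
     (if j < m then w ((i,j), (i,j+1)) else 0)
   + (if i \<le> n then w ((i,j), (i+1,j)) else 0)
   - (if 0 < j then w ((i,j-1), (i,j)) else 0)
   - (if 1 < i then w ((i-1,j), (i,j)) else 0)"
proof -
  have out: "{e\<in>edgesH n m. fst e = (i,j)} =
     (if j < m then {((i,j), (i,j+1))} else {})
   \<union> (if i \<le> n then {((i,j), (i+1,j))} else {})"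
    using assms by (auto simp: edgesH_def split: if_splits)
  have "in": "{e\<in>edgesH n m. snd e = (i,j)} =
     (if 0 < j then {((i,j-1), (i,j))} else {})
   \<union> (if 1 < i then {((i-1,j), (i,j))} else {})"
    using assms by (auto simp: edgesH_def split: if_splits)
  show ?thesis unfolding netflow_def out "in"
    by (cases "j < m"; cases "i \<le> n"; cases "0 < j"; cases "1 < i") auto
qed

definition G_edges_of :: "nat \<Rightarrow> edgeH \<Rightarrow> edgeG set" where
  "G_edges_of n = (\<lambda>((i,j),(i',j')).
     if i = n+1 then (\<lambda>k. (Some (n,k), None)) ` {..j}
     else if i' = n+1 then {(Some (n,j), None)}
     else {(Some (i,j), Some (i',j'))})"

definition G_to_H :: "nat \<Rightarrow> nat \<Rightarrow> real \<Rightarrow> (edgeG \<Rightarrow> real) \<Rightarrow> edgeH \<Rightarrow> real" where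
  "G_to_H n m c = affine_map (edgesG n m) (edgesH n m)
     (\<lambda>e'. if fst (fst e') = 1 \<and> fst (snd e') = 1 then - c else 0) (\<lambda>e' e. of_bool (e \<in> G_edges_of n e'))"

definition H_to_G :: "nat \<Rightarrow> nat \<Rightarrow> real \<Rightarrow> (edgeH \<Rightarrow> real) \<Rightarrow> edgeG \<Rightarrow> real" where
  "H_to_G n m c z e = (if e \<in> edgesG n m then (case e of
       (Some (i,j), Some (i',j')) \<Rightarrow> z ((i,j),(i',j')) + (if i = 1 \<and> i' = 1 then c else 0)
     | (Some (i,j), None) \<Rightarrow> z ((i,j),(Suc i,j))
     | _ \<Rightarrow> 0) else 0)"

lemma G_edges_of_subset:
  assumes "1 \<le> n" "e' \<in> edgesH n m"
  shows "G_edges_of n e' \<subseteq> edgesG n m"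
  using assms(2) by (cases rule: edgesH_cases) (use assms(1) in \<open>auto simp: G_edges_of_def edgesG_def\<close>)

lemma G_to_H_apply:
  assumes "1 \<le> n" "e' \<in> edgesH n m"
  shows "G_to_H n m c x e' =
    (if fst (fst e') = 1 \<and> fst (snd e') = 1 then - c else 0) + sum x (G_edges_of n e')"
  unfolding G_to_H_def using assms
  by (intro affine_map_of_bool_apply[where S = "G_edges_of n"]) (simp_all add: finite_edgesG G_edges_of_subset)

lemma G_to_H_horizontal:
  assumes "1 \<le> n" "1 \<le> i" "i \<le> n+1" "j < m"
  shows "G_to_H n m c x ((i,j),(i,Suc j)) =
    (if i = n+1 then (\<Sum>k\<le>j. x (Some (n,k), None))
     else x (Some (i,j), Some (i,Suc j)) - (if i = 1 then c else 0))"
proof -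
  have "((i,j),(i,Suc j)) \<in> edgesH n m" using assms by (simp add: edgesH_horizontal_iff)
  then show ?thesis
    using assms by (auto simp: G_to_H_apply G_edges_of_def sum.reindex inj_on_def)
qed

lemma G_to_H_vertical:
  assumes "1 \<le> i" "i \<le> n" "j \<le> m"
  shows "G_to_H n m c x ((i,j),(Suc i,j)) =
    (if i = n then x (Some (n,j), None) else x (Some (i,j), Some (Suc i,j)))"
proof -
  have "((i,j),(Suc i,j)) \<in> edgesH n m" using assms by (simp add: edgesH_vertical_iff)
  then show ?thesis
    using assms by (auto simp: G_to_H_apply G_edges_of_def)
qed

lemma H_to_G_horizontal:
  "1 \<le> i \<Longrightarrow> i \<le> n \<Longrightarrow> j < m \<Longrightarrow>
   H_to_G n m c z (Some (i,j), Some (i,Suc j)) = z ((i,j),(i,Suc j)) + (if i = 1 then c else 0)"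
  by (simp add: H_to_G_def edgesG_horizontal_iff)

lemma H_to_G_vertical:
  "1 \<le> i \<Longrightarrow> i < n \<Longrightarrow> j \<le> m \<Longrightarrow>
   H_to_G n m c z (Some (i,j), Some (Suc i,j)) = z ((i,j),(Suc i,j))"
  by (simp add: H_to_G_def edgesG_vertical_iff)

lemma H_to_G_sink: "j \<le> m \<Longrightarrow> H_to_G n m c z (Some (n,j), None) = z ((n,j),(Suc n,j))"
  by (simp add: H_to_G_def edgesG_sink_iff)

definition row1_netflow_shift :: "nat \<Rightarrow> real \<Rightarrow> nat \<Rightarrow> nat \<Rightarrow> real" where
  "row1_netflow_shift m c i j = (if i = 1 then (if 0 < j then c else 0) - (if j < m then c else 0) else 0)"

lemma netflow_G_to_H:
  assumes "1 \<le> i" "i \<le> n" "j \<le> m"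
  shows "netflow (edgesH n m) (G_to_H n m c x) (i,j) =
    netflow (edgesG n m) x (Some (i,j)) + row1_netflow_shift m c i j"
proof -
  obtain i' where i: "i = Suc i'" using assms(1) by (cases i) auto
  show ?thesis
    using assms unfolding i
    by (cases j) (auto simp: netflow_edgesH netflow_edgesG_Some G_to_H_horizontal G_to_H_vertical
        row1_netflow_shift_def)
qed

lemma netflow_G_to_H_last_row:
  assumes "1 \<le> n" "j \<le> m"
  shows "netflow (edgesH n m) (G_to_H n m c x) (Suc n, j) =
    (if j = m then netflow (edgesG n m) x None else 0)"
  using assms
  by (cases j) (auto simp: netflow_edgesH netflow_edgesG_None G_to_H_horizontal G_to_H_vertical)

lemma flowG_row1_lower_bound:
  assumes "1 \<le> n" "x \<in> flowG n m A B" "j < m"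
  shows "B 1 \<le> x (Some (1,j), Some (1,Suc j))"
proof -
  let ?h = "\<lambda>k. x (Some (1,k), Some (1,Suc k))"
  have nonneg: "\<And>e. e \<in> edgesG n m \<Longrightarrow> 0 \<le> x e"
    and conservation: "\<And>v. v \<in> vertsG n m \<Longrightarrow> netflow (edgesG n m) x v = demandG n m A B v"
    using assms(2) by (auto simp: flowG_def flow_polytope_def)
  have descend: "(if Suc k < m then ?h (Suc k) else B 1) \<le> ?h k" if "k < m" for k
  proof -
    have "netflow (edgesG n m) x (Some (1, Suc k)) = demandG n m A B (Some (1, Suc k))"
      using that assms(1) by (intro conservation) (auto simp: vertsG_def)
    moreover have "0 \<le> (if 1 < n then x (Some (1,Suc k), Some (2,Suc k)) else x (Some (1,Suc k), None))"
      using that assms(1) by (auto intro!: nonneg simp: edgesG_def)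
    ultimately show ?thesis
      using that assms(1) by (auto simp: netflow_edgesG_Some demandG_def numeral_2_eq_2 split: if_splits)
  qed
  have "j \<le> m - 1" using assms(3) by simp
  then show ?thesis
  proof (induction j rule: inc_induct)
    case base
    then show ?case using descend[of "m - 1"] assms(3) by simp
  next
    case (step k)
    then have "Suc k < m" by simp
    then have "?h (Suc k) \<le> ?h k" using descend[of k] by simp
    then show ?case using step.IH by simp
  qed
qed

definition aH :: "nat \<Rightarrow> (nat \<Rightarrow> real) \<Rightarrow> (nat \<Rightarrow> real) \<Rightarrow> nat \<Rightarrow> real" where
  "aH n A B = (\<lambda>i. if i = 1 then A 1 - B 1 else if i \<le> n then A i else 0)"

definition bH :: "nat \<Rightarrow> (nat \<Rightarrow> real) \<Rightarrow> (nat \<Rightarrow> real) \<Rightarrow> nat \<Rightarrow> real" where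
  "bH n A B = (\<lambda>i. if i = 1 then 0 else if i \<le> n then B i else (\<Sum>i=1..n. A i - B i))"

lemma demandH_aH_bH:
  assumes "1 \<le> m" "1 \<le> i" "i \<le> n" "j \<le> m"
  shows "demandH n m (aH n A B) (bH n A B) (i,j) =
    demandG n m A B (Some (i,j)) + row1_netflow_shift m (B 1) i j"
  using assms by (auto simp: demandH_def demandG_def aH_def bH_def row1_netflow_shift_def)

lemma demandH_aH_bH_last_row:
  assumes "1 \<le> n" "j \<le> m"
  shows "demandH n m (aH n A B) (bH n A B) (Suc n, j) = (if j = m then demandG n m A B None else 0)"
  using assms by (auto simp: demandH_def demandG_def aH_def bH_def sum_subtractf)

lemma G_to_H_mem_flowH:
  assumes n: "1 \<le> n" and m: "1 \<le> m" and x: "x \<in> flowG n m A B"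
  shows "G_to_H n m (B 1) x \<in> flowH n m (aH n A B) (bH n A B)"
proof -
  let ?z = "G_to_H n m (B 1) x"
  have nonneg: "\<And>e. e \<in> edgesG n m \<Longrightarrow> 0 \<le> x e"
    and conservation: "\<And>v. v \<in> vertsG n m \<Longrightarrow> netflow (edgesG n m) x v = demandG n m A B v"
    using x by (auto simp: flowG_def flow_polytope_def)
  have "0 \<le> ?z e" if "e \<in> edgesH n m" for e
    using that
  proof (cases rule: edgesH_cases)
    case (1 i j)
    then show ?thesis
      using n flowG_row1_lower_bound[OF n x, of j]
      by (auto simp: G_to_H_horizontal edgesG_sink_iff edgesG_horizontal_iff intro!: nonneg sum_nonneg)
  next
    case (2 i j)
    then show ?thesis
      by (auto simp: G_to_H_vertical edgesG_sink_iff edgesG_vertical_iff intro!: nonneg)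
  qed
  moreover have "netflow (edgesH n m) ?z v = demandH n m (aH n A B) (bH n A B) v" if v: "v \<in> vertsH n m" for v
  proof -
    obtain i j where v: "v = (i,j)" "1 \<le> i" "i \<le> n+1" "j \<le> m"
      using v by (auto simp: vertsH_def)
    show ?thesis
    proof (cases "i \<le> n")
      case True
      then have "netflow (edgesG n m) x (Some (i,j)) = demandG n m A B (Some (i,j))"
        using v by (intro conservation) (auto simp: vertsG_def)
      then show ?thesis
        using v True m by (simp add: netflow_G_to_H demandH_aH_bH)
    next
      case False
      then have "i = Suc n" using v by simp
      moreover have "netflow (edgesG n m) x None = demandG n m A B None"
        by (intro conservation) (simp add: vertsG_def)
      ultimately show ?thesis
        using v n by (simp add: netflow_G_to_H_last_row demandH_aH_bH_last_row)
    qed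
  qed
  ultimately show ?thesis
    by (simp add: flowH_def flow_polytope_def G_to_H_def affine_map_def)
qed

lemma flowH_last_row:
  assumes "\<And>k. k < m \<Longrightarrow> netflow (edgesH n m) z (Suc n, k) = 0" "1 \<le> n" "j < m"
  shows "z ((Suc n,j),(Suc n,Suc j)) = (\<Sum>k\<le>j. z ((n,k),(Suc n,k)))"
  using assms(3)
proof (induction j)
  case 0
  then show ?case using assms(1)[of 0] assms(2) by (simp add: netflow_edgesH)
next
  case (Suc j)
  then show ?case using assms(1)[of "Suc j"] assms(2) by (simp add: netflow_edgesH)
qed

lemma G_to_H_H_to_G:
  assumes n: "1 \<le> n"
    and support: "\<And>e. e \<notin> edgesH n m \<Longrightarrow> z e = 0"
    and last_row: "\<And>k. k < m \<Longrightarrow> netflow (edgesH n m) z (Suc n, k) = 0"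
  shows "G_to_H n m c (H_to_G n m c z) = z"
proof
  fix e
  show "G_to_H n m c (H_to_G n m c z) e = z e"
  proof (cases "e \<in> edgesH n m")
    case True
    then show ?thesis
    proof (cases rule: edgesH_cases)
      case (1 i j)
      then show ?thesis
        using n flowH_last_row[OF last_row n, of j]
        by (auto simp: G_to_H_horizontal H_to_G_horizontal H_to_G_sink)
    next
      case (2 i j)
      then show ?thesis
        by (auto simp: G_to_H_vertical H_to_G_vertical H_to_G_sink)
    qed
  qed (simp add: support G_to_H_def affine_map_def)
qed

lemma H_to_G_G_to_H:
  assumes n: "1 \<le> n" and support: "\<And>e. e \<notin> edgesG n m \<Longrightarrow> x e = 0"
  shows "H_to_G n m c (G_to_H n m c x) = x"
proof
  fix e
  show "H_to_G n m c (G_to_H n m c x) e = x e"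
  proof (cases "e \<in> edgesG n m")
    case True
    then show ?thesis
      by (cases rule: edgesG_cases)
        (use n in \<open>auto simp: G_to_H_horizontal G_to_H_vertical H_to_G_horizontal H_to_G_vertical H_to_G_sink\<close>)
  qed (simp add: support H_to_G_def)
qed

lemma G_to_H_H_to_G_flowH:
  assumes "1 \<le> n" "z \<in> flowH n m (aH n A B) (bH n A B)"
  shows "G_to_H n m c (H_to_G n m c z) = z"
  using assms by (intro G_to_H_H_to_G)
    (auto simp: flowH_def flow_polytope_def vertsH_def demandH_aH_bH_last_row)

lemma H_to_G_mem_flowG:
  assumes n: "1 \<le> n" and m: "1 \<le> m" and B1: "0 \<le> B 1"
    and z: "z \<in> flowH n m (aH n A B) (bH n A B)"
  shows "H_to_G n m (B 1) z \<in> flowG n m A B"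
proof -
  let ?x = "H_to_G n m (B 1) z"
  have nonneg: "\<And>e. e \<in> edgesH n m \<Longrightarrow> 0 \<le> z e"
    and conservation: "\<And>v. v \<in> vertsH n m \<Longrightarrow>
      netflow (edgesH n m) z v = demandH n m (aH n A B) (bH n A B) v"
    using z by (auto simp: flowH_def flow_polytope_def)
  have z_eq: "G_to_H n m (B 1) ?x = z"
    using n z by (rule G_to_H_H_to_G_flowH)
  have "0 \<le> ?x e" if "e \<in> edgesG n m" for e
    using that
    by (cases rule: edgesG_cases)
      (use n B1 in \<open>auto simp: H_to_G_horizontal H_to_G_vertical H_to_G_sink
        edgesH_horizontal_iff edgesH_vertical_iff intro!: nonneg add_nonneg_nonneg\<close>)
  moreover have "netflow (edgesG n m) ?x v = demandG n m A B v" if v: "v \<in> vertsG n m" for v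
  proof (cases v)
    case None
    have "netflow (edgesG n m) ?x None = netflow (edgesH n m) (G_to_H n m (B 1) ?x) (Suc n, m)"
      using n by (simp add: netflow_G_to_H_last_row)
    also have "\<dots> = demandG n m A B None"
      using n unfolding z_eq by (simp add: conservation vertsH_def demandH_aH_bH_last_row)
    finally show ?thesis using None by simp
  next
    case (Some p)
    then obtain i j where v: "v = Some (i,j)" "1 \<le> i" "i \<le> n" "j \<le> m"
      using v by (auto simp: vertsG_def)
    have "netflow (edgesG n m) ?x (Some (i,j)) + row1_netflow_shift m (B 1) i j
        = netflow (edgesH n m) (G_to_H n m (B 1) ?x) (i,j)"
      using v by (simp add: netflow_G_to_H)
    also have "\<dots> = demandH n m (aH n A B) (bH n A B) (i,j)"
      unfolding z_eq using v by (intro conservation) (auto simp: vertsH_def)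
    finally show ?thesis
      using v m by (simp add: demandH_aH_bH)
  qed
  ultimately show ?thesis
    by (simp add: flowG_def flow_polytope_def H_to_G_def)
qed

lemma G_to_H_image_flowG:
  assumes "1 \<le> n" "1 \<le> m" "0 \<le> B 1"
  shows "G_to_H n m (B 1) ` flowG n m A B = flowH n m (aH n A B) (bH n A B)"
proof (intro equalityI subsetI)
  fix z assume z: "z \<in> flowH n m (aH n A B) (bH n A B)"
  then have "z = G_to_H n m (B 1) (H_to_G n m (B 1) z)"
    using assms(1) by (simp add: G_to_H_H_to_G_flowH)
  then show "z \<in> G_to_H n m (B 1) ` flowG n m A B"
    using H_to_G_mem_flowG[OF assms z] by blast
qed (use G_to_H_mem_flowH assms in blast)

lemma H_to_G_int_points: "c \<in> \<int> \<Longrightarrow> H_to_G n m c ` int_points \<subseteq> int_points"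
  unfolding int_points_def H_to_G_def by (auto split: prod.splits option.splits)

theorem proposition7p6:
  fixes n m :: nat and a b :: "nat \<Rightarrow> nat"
  assumes "n \<ge> 1" and "m \<ge> 1"
  shows "let bn1 = (\<Sum>i=1..n. real (a i) - real (b i));
             a' = (\<lambda>i. if i = 1 then real (a 1) - real (b 1) else if i \<le> n then real (a i) else 0);
             b' = (\<lambda>i. if i = 1 then 0 else if i \<le> n then real (b i) else bn1)
         in integrally_equivalent
              (edgesG n m) (flowG n m (\<lambda>i. real (a i)) (\<lambda>i. real (b i)))
              (edgesH n m) (flowH n m a' b')"
proof -
  let ?A = "\<lambda>i. real (a i)" and ?B = "\<lambda>i. real (b i)"
  let ?f = "G_to_H n m (?B 1)" and ?g = "H_to_G n m (?B 1)"
  have "?f ` flowG n m ?A ?B = flowH n m (aH n ?A ?B) (bH n ?A ?B)"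
    using assms by (intro G_to_H_image_flowG) auto
  moreover have "\<And>x. (\<And>e. e \<notin> edgesG n m \<Longrightarrow> x e = 0) \<Longrightarrow> ?g (?f x) = x"
    using assms(1) by (rule H_to_G_G_to_H)
  moreover have "?f ` int_points \<subseteq> int_points"
    unfolding G_to_H_def by (rule affine_map_int_points) auto
  moreover have "?g ` int_points \<subseteq> int_points"
    by (simp add: H_to_G_int_points)
  ultimately have "integrally_equivalent (edgesG n m) (flowG n m ?A ?B)
      (edgesH n m) (flowH n m (aH n ?A ?B) (bH n ?A ?B))"
    unfolding G_to_H_def by (intro integrally_equivalentI) (auto simp: flowG_def flow_polytope_def)
  then show ?thesis unfolding Let_def aH_def bH_def .
qed

end
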